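(* Let $x_1<x_2$, $\eta\in\mathbb{R}$, $\rho_{0,2}\in L^1(\mathbb{R})$, and $y_2>x_1$. Define \[ \rho_0(x)=\begin{cases}\eta\,\mathbb{1}_{(x_1,x_2)}(x) & \text{if } x\geq x_1,\\ \rho_{0,2}(x) & \text{if } x<x_1,\end{cases} \qquad \rho_T(x)=\begin{cases}\dfrac{\eta(x_2-x_1)}{y_2-x_1}\mathbb{1}_{(x_1,y_2)}(x) & \text{if } x\geq x_1,\\ \rho_{0,2}(x) & \text{if } x<x_1.\end{cases} \] Then, for $T>0$, there exist real numbers $w,a,b$ such that the solution $\rho$ of \[ \partial_t\rho+w\,\partial_x\big(\sigma(ax+b)\rho\big)=0\quad (x,t)\in\mathbb{R}\times(0,T),\qquad \rho(0)=\rho_0, \] satisfies $\rho(T)=\rho_T$.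
   Context: $\sigma(z)=\max(z,0)$ is the ReLU function. Solutions of the (linear) continuity equation are understood in the distributional sense; the equation is well-posed since the velocity field is Lipschitz. *)

theory Defs
  imports "HOL-Analysis.Analysis"
begin

definition relu :: "real \<Rightarrow> real" where
  "relu z = max z 0"

definition test_function :: "(real \<Rightarrow> real) \<Rightarrow> bool" where
  "test_function phi \<longleftrightarrow>
     (\<forall>x. phi differentiable (at x)) \<and> continuous_on UNIV (deriv phi) \<and>
     (\<exists>R. \<forall>x. \<bar>x\<bar> > R \<longrightarrow> phi x = 0)"

definition weak_solution ::
  "real \<Rightarrow> (real \<Rightarrow> real) \<Rightarrow> (real \<Rightarrow> real) \<Rightarrow> (real \<Rightarrow> real \<Rightarrow> real) \<Rightarrow> bool" where
  "weak_solution T v rho0 rho \<longleftrightarrow>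
     (\<forall>t\<in>{0..T}. integrable lborel (rho t)) \<and>
     (\<lambda>p. rho (fst p) (snd p)) \<in> borel_measurable (lborel \<Otimes>\<^sub>M lborel) \<and>
     set_integrable (lborel \<Otimes>\<^sub>M lborel) ({0..T} \<times> UNIV) (\<lambda>p. rho (fst p) (snd p)) \<and>
     (AE x in lborel. rho 0 x = rho0 x) \<and>
     (\<forall>phi. test_function phi \<longrightarrow>
        continuous_on {0..T} (\<lambda>t. \<integral>x. rho t x * phi x \<partial>lborel) \<and>
        (\<forall>t\<in>{0..T}. (\<integral>x. rho t x * phi x \<partial>lborel) - (\<integral>x. rho0 x * phi x \<partial>lborel)
            = (LBINT s=0..t. (\<integral>x. v x * rho s x * deriv phi x \<partial>lborel))))"

end

theory Submission
  imports Defs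
begin

(* With a = 1 and b = -x1 the velocity w (x - x1)_+ vanishes left of x1, so rho02 stays put,
   while right of x1 it is the linear field w (x - x1), whose flow dilates about x1 by the
   factor e^(wt). The block eta 1_(x1,x2) is thus carried to the block of height eta e^(-wt)
   on (x1, x1 + (x2 - x1) e^(wt)), which is the target at time T for
   w = ln ((y2 - x1) / (x2 - x1)) / T. Tested against phi with antiderivative Phi from x1, the
   block contributes eta e^(-wt) Phi(x1 + (x2 - x1) e^(wt)); differentiating in t and integrating
   by parts in x yields exactly the flux term of the weak formulation. *)

lemma test_function_has_real_derivative:
  assumes "test_function phi"
  shows "(phi has_real_derivative deriv phi x) (at x)"
  using assms unfolding test_function_def by (simp add: DERIV_deriv_iff_real_differentiable)

lemma test_function_continuous:
  assumes "test_function phi"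
  shows "continuous_on UNIV phi"
  using test_function_has_real_derivative[OF assms]
  by (meson DERIV_isCont continuous_at_imp_continuous_on)

lemma test_function_deriv_continuous:
  assumes "test_function phi"
  shows "continuous_on UNIV (deriv phi)"
  using assms unfolding test_function_def by simp

lemma test_function_bounded:
  assumes "test_function phi"
  obtains B where "\<And>x. \<bar>phi x\<bar> \<le> B"
proof -
  obtain R where R: "\<And>x. \<bar>x\<bar> > R \<Longrightarrow> phi x = 0"
    using assms unfolding test_function_def by blast
  have "bounded (phi ` cball 0 \<bar>R\<bar>)"
    using test_function_continuous[OF assms]
    by (intro compact_imp_bounded compact_continuous_image) (auto intro: continuous_on_subset)
  then obtain B where B: "\<And>x. x \<in> cball 0 \<bar>R\<bar> \<Longrightarrow> \<bar>phi x\<bar> \<le> B"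
    by (fastforce simp: bounded_iff)
  have "\<bar>phi x\<bar> \<le> max B 0" for x
    using R[of x] B[of x] by (cases "\<bar>x\<bar> > R") auto
  then show ?thesis by (rule that)
qed

lemma interval_integral_has_real_derivative:
  fixes f :: "real \<Rightarrow> real" and c y :: real
  assumes "continuous_on UNIV f"
  shows "((\<lambda>u. LBINT x=c..u. f x) has_real_derivative f y) (at y)"
proof -
  have "((\<lambda>u. LBINT x=c..u. f x) has_vector_derivative f y) (at y within {min c y - 1..max c y + 1})"
    by (rule interval_integral_FTC2) (auto intro: continuous_on_subset[OF assms])
  moreover have "at y within {min c y - 1..max c y + 1} = at y"
    by (rule at_within_Icc_at) auto
  ultimately show ?thesis by (simp add: has_real_derivative_iff_has_vector_derivative)
qed

lemma interval_integral_moment_by_parts: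
  fixes f f' :: "real \<Rightarrow> real" and c y :: real
  assumes f': "\<And>x. (f has_real_derivative f' x) (at x)" and "continuous_on UNIV f'" and "c \<le> y"
  shows "(LBINT x=c..y. (x - c) * f' x) = (y - c) * f y - (LBINT x=c..y. f x)"
proof -
  have "continuous_on UNIV f"
    using f' by (meson DERIV_isCont continuous_at_imp_continuous_on)
  then have cont: "continuous_on {c..y} f" "continuous_on {c..y} f'"
    using assms(2) continuous_on_subset by blast+
  have "(LBINT x=c..y. f x + (x - c) * f' x) = (y - c) * f y - (c - c) * f c"
  proof (rule interval_integral_FTC_finite)
    show "continuous_on {min c y..max c y} (\<lambda>x. f x + (x - c) * f' x)"
      using assms cont by (auto intro!: continuous_intros)
    fix x
    have "((\<lambda>x. (x - c) * f x) has_real_derivative 1 * f x + (x - c) * f' x) (at x)"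
      using f' by (auto intro!: derivative_eq_intros)
    then show "((\<lambda>x. (x - c) * f x) has_vector_derivative f x + (x - c) * f' x)
        (at x within {min c y..max c y})"
      by (simp add: has_real_derivative_iff_has_vector_derivative has_vector_derivative_at_within)
  qed
  moreover have "(LBINT x=c..y. f x + (x - c) * f' x)
      = (LBINT x=c..y. f x) + (LBINT x=c..y. (x - c) * f' x)"
    using assms cont
    by (intro interval_lebesgue_integral_add(2) interval_integrable_continuous_on continuous_intros) auto
  ultimately show ?thesis by simp
qed

lemma integrable_mult_bounded:
  fixes f g :: "'a \<Rightarrow> real"
  assumes "integrable M f" and "g \<in> borel_measurable M" and "\<And>x. \<bar>g x\<bar> \<le> B"
  shows "integrable M (\<lambda>x. f x * g x)"
proof (rule Bochner_Integration.integrable_bound)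
  show "integrable M (\<lambda>x. B * f x)" using assms(1) by simp
  show "(\<lambda>x. f x * g x) \<in> borel_measurable M" using assms(1,2) by simp
  have "\<bar>f x * g x\<bar> \<le> \<bar>B * f x\<bar>" for x
  proof -
    have "\<bar>f x * g x\<bar> \<le> \<bar>f x\<bar> * B"
      unfolding abs_mult using assms(3) by (rule mult_left_mono) simp
    also have "\<dots> \<le> \<bar>B * f x\<bar>"
      by (simp add: abs_mult mult.commute mult_right_mono)
    finally show ?thesis .
  qed
  then show "AE x in M. norm (f x * g x) \<le> norm (B * f x)"
    by simp
qed

lemma (in pair_sigma_finite) integrable_mult_fst_snd:
  fixes f g :: "_ \<Rightarrow> real"
  assumes f: "integrable M1 f" and g: "integrable M2 g"
  shows "integrable (M1 \<Otimes>\<^sub>M M2) (\<lambda>p. f (fst p) * g (snd p))"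
proof (rule Fubini_integrable)
  have [measurable]: "f \<in> borel_measurable M1" "g \<in> borel_measurable M2"
    using f g by auto
  show "(\<lambda>p. f (fst p) * g (snd p)) \<in> borel_measurable (M1 \<Otimes>\<^sub>M M2)" by measurable
  show "integrable M1 (\<lambda>x. LINT y|M2. norm (f (fst (x, y)) * g (snd (x, y))))"
    using f by (simp add: abs_mult)
  show "AE x in M1. integrable M2 (\<lambda>y. f (fst (x, y)) * g (snd (x, y)))"
    using g by simp
qed

locale dilating_block =
  fixes c L w eta :: real and rho_left :: "real \<Rightarrow> real"
  assumes L_pos: "L > 0" and integrable_rho_left: "integrable lborel rho_left"
begin

definition front :: "real \<Rightarrow> real" where
  "front t = c + L * exp (w * t)"

definition rho :: "real \<Rightarrow> real \<Rightarrow> real" where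
  "rho t x = indicator {..<c} x * rho_left x + eta * exp (- (w * t)) * indicator {c<..<front t} x"

lemma front_gt: "c < front t"
  using L_pos by (simp add: front_def)

lemma integrable_rho: "integrable lborel (rho t)"
proof -
  have "integrable lborel (\<lambda>x. indicator {..<c} x *\<^sub>R rho_left x)"
    using integrable_rho_left by (intro integrable_mult_indicator) auto
  moreover have "integrable lborel (indicator {c<..<front t} :: real \<Rightarrow> real)"
    by (intro integrable_real_indicator emeasure_bounded_finite) auto
  ultimately show ?thesis
    unfolding rho_def by simp
qed

lemma rho_measurable:
  "(\<lambda>p. rho (fst p) (snd p)) \<in> borel_measurable (lborel \<Otimes>\<^sub>M lborel)"
proof -
  have [measurable]: "rho_left \<in> borel_measurable lborel"
    using integrable_rho_left by auto
  show ?thesis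
    unfolding rho_def front_def indicator_def greaterThanLessThan_iff lessThan_iff by measurable
qed

lemma rho_bound:
  assumes "t \<in> {0..T}"
  shows "\<bar>rho t x\<bar> \<le> \<bar>rho_left x\<bar>
    + \<bar>eta\<bar> * exp (\<bar>w\<bar> * T) * indicator {c<..<c + L * exp (\<bar>w\<bar> * T)} x"
proof -
  have "\<bar>w * t\<bar> \<le> \<bar>w\<bar> * T"
    using assms by (simp add: abs_mult mult_left_mono)
  then have "\<bar>eta\<bar> * exp (- (w * t)) \<le> \<bar>eta\<bar> * exp (\<bar>w\<bar> * T)"
    and "front t \<le> c + L * exp (\<bar>w\<bar> * T)"
    using L_pos by (simp_all add: front_def mult_left_mono)
  then show ?thesis
    unfolding rho_def by (auto simp: indicator_def abs_mult)
qed

lemma set_integrable_rho: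
  "set_integrable (lborel \<Otimes>\<^sub>M lborel) ({0..T} \<times> UNIV) (\<lambda>p. rho (fst p) (snd p))"
proof -
  define E where "E = exp (\<bar>w\<bar> * T)"
  define g where "g x = \<bar>rho_left x\<bar> + \<bar>eta\<bar> * E * indicator {c<..<c + L * E} x" for x
  have "integrable lborel g"
    unfolding g_def using integrable_rho_left L_pos
    by (intro Bochner_Integration.integrable_add integrable_abs integrable_mult_right
        integrable_real_indicator) (auto simp: E_def)
  then have "integrable (lborel \<Otimes>\<^sub>M lborel) (\<lambda>p. indicator {0..T} (fst p) * g (snd p))"
    by (intro lborel_pair.integrable_mult_fst_snd integrable_real_indicator emeasure_bounded_finite) auto
  then show ?thesis
    unfolding set_integrable_def
  proof (rule Bochner_Integration.integrable_bound)
    show "(\<lambda>p. indicator ({0..T} \<times> UNIV) p *\<^sub>R rho (fst p) (snd p))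
        \<in> borel_measurable (lborel \<Otimes>\<^sub>M lborel)"
      using rho_measurable by measurable
    have "\<bar>indicator ({0..T} \<times> UNIV) p *\<^sub>R rho (fst p) (snd p)\<bar>
        \<le> indicator {0..T} (fst p) * g (snd p)"
      for p :: "real \<times> real"
      using rho_bound[of "fst p" T "snd p"] by (auto simp: g_def E_def mem_Times_iff split: split_indicator)
    then show "AE p in lborel \<Otimes>\<^sub>M lborel.
        norm (indicator ({0..T} \<times> UNIV) p *\<^sub>R rho (fst p) (snd p))
          \<le> norm (indicator {0..T} (fst p) * g (snd p))"
      by (intro AE_I2) (metis abs_ge_self order_trans real_norm_def)
  qed
qed

lemma integral_rho_mult:
  assumes "test_function phi"
  shows "(\<integral>x. rho t x * phi x \<partial>lborel)
    = (LINT x:{..<c}|lborel. rho_left x * phi x) + eta * (exp (- (w * t)) * (LBINT x=c..front t. phi x))"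
proof -
  have phi_cont: "continuous_on UNIV phi"
    using assms by (rule test_function_continuous)
  obtain B where "\<And>x. \<bar>phi x\<bar> \<le> B"
    using test_function_bounded[OF assms] by blast
  moreover have "phi \<in> borel_measurable lborel"
    using phi_cont by (simp add: borel_measurable_continuous_onI)
  ultimately have "integrable lborel (\<lambda>x. rho_left x * phi x)"
    using integrable_rho_left by (intro integrable_mult_bounded)
  then have left: "set_integrable lborel {..<c} (\<lambda>x. rho_left x * phi x)"
    unfolding set_integrable_def by (intro integrable_mult_indicator) auto
  have "set_integrable lborel {c..front t} phi"
    by (intro borel_integrable_atLeastAtMost' continuous_on_subset[OF phi_cont]) auto
  then have block: "set_integrable lborel {c<..<front t} phi"
    by (rule set_integrable_subset) auto
  have "(\<lambda>x. rho t x * phi x) = (\<lambda>x. indicator {..<c} x *\<^sub>R (rho_left x * phi x)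
      + (eta * exp (- (w * t))) * (indicator {c<..<front t} x *\<^sub>R phi x))"
    using front_gt[of t] by (auto simp: rho_def fun_eq_iff indicator_def)
  then show ?thesis
    using left block front_gt[of t]
    by (simp add: set_integrable_def set_lebesgue_integral_def interval_lebesgue_integral_def)
qed

lemma integral_flux_rho:
  "(\<integral>x. w * relu (x - c) * rho s x * deriv phi x \<partial>lborel)
    = eta * (w * exp (- (w * s)) * (LBINT x=c..front s. (x - c) * deriv phi x))"
proof -
  have "(\<lambda>x. w * relu (x - c) * rho s x * deriv phi x)
      = (\<lambda>x. (eta * (w * exp (- (w * s))))
          * (indicator {c<..<front s} x *\<^sub>R ((x - c) * deriv phi x)))"
    by (auto simp: fun_eq_iff relu_def rho_def indicator_def)
  then show ?thesis
    using front_gt[of s]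
    by (simp add: set_lebesgue_integral_def interval_lebesgue_integral_def)
qed

lemma block_pairing_has_real_derivative:
  fixes phi phi' :: "real \<Rightarrow> real"
  assumes phi': "\<And>x. (phi has_real_derivative phi' x) (at x)" and "continuous_on UNIV phi'"
  shows "((\<lambda>t. exp (- (w * t)) * (LBINT x=c..front t. phi x)) has_real_derivative
      w * exp (- (w * t)) * (LBINT x=c..front t. (x - c) * phi' x)) (at t)"
proof -
  define Phi where "Phi y = (LBINT x=c..y. phi x)" for y :: real
  have deriv_decay: "((\<lambda>t. exp (- (w * t))) has_real_derivative - w * exp (- (w * t))) (at t)"
    by (auto intro!: derivative_eq_intros)
  have "continuous_on UNIV phi"
    using phi' by (meson DERIV_isCont continuous_at_imp_continuous_on)
  then have "(Phi has_real_derivative phi y) (at y)" for y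
    unfolding Phi_def by (rule interval_integral_has_real_derivative)
  moreover have "(front has_real_derivative w * (front t - c)) (at t)"
    unfolding front_def[abs_def] by (auto intro!: derivative_eq_intros)
  ultimately have "((\<lambda>t. Phi (front t)) has_real_derivative phi (front t) * (w * (front t - c))) (at t)"
    by (rule DERIV_chain2)
  with deriv_decay have "((\<lambda>t. exp (- (w * t)) * Phi (front t)) has_real_derivative
      exp (- (w * t)) * (phi (front t) * (w * (front t - c))) + - w * exp (- (w * t)) * Phi (front t)) (at t)"
    by (rule DERIV_mult')
  also have "exp (- (w * t)) * (phi (front t) * (w * (front t - c))) + - w * exp (- (w * t)) * Phi (front t)
      = w * exp (- (w * t)) * ((front t - c) * phi (front t) - Phi (front t))"
    by (simp add: algebra_simps)
  also have "(front t - c) * phi (front t) - Phi (front t) = (LBINT x=c..front t. (x - c) * phi' x)"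
    unfolding Phi_def using front_gt[of t]
    by (intro interval_integral_moment_by_parts[symmetric] phi' assms(2)) simp
  finally show ?thesis
    unfolding Phi_def .
qed

lemma block_pairing_FTC:
  fixes phi phi' :: "real \<Rightarrow> real"
  assumes phi': "\<And>x. (phi has_real_derivative phi' x) (at x)" and "continuous_on UNIV phi'"
  shows "exp (- (w * t)) * (LBINT x=c..front t. phi x) - (LBINT x=c..front 0. phi x)
      = (LBINT s=0..t. w * exp (- (w * s)) * (LBINT x=c..front s. (x - c) * phi' x))"
proof -
  have "continuous_on UNIV (\<lambda>x. (x - c) * phi' x)"
    using assms(2) by (intro continuous_intros)
  then have "((\<lambda>y. LBINT x=c..y. (x - c) * phi' x) has_real_derivative (y - c) * phi' y) (at y)" for y
    by (rule interval_integral_has_real_derivative)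
  then have "continuous_on UNIV (\<lambda>y::real. LBINT x=c..y. (x - c) * phi' x)"
    by (meson DERIV_isCont continuous_at_imp_continuous_on)
  moreover have "continuous_on UNIV front"
    unfolding front_def[abs_def] by (intro continuous_intros)
  ultimately have "continuous_on UNIV (\<lambda>s. LBINT x=c..front s. (x - c) * phi' x)"
    by (rule continuous_on_compose2) auto
  then have "continuous_on UNIV (\<lambda>s. w * exp (- (w * s)) * (LBINT x=c..front s. (x - c) * phi' x))"
    by (intro continuous_intros)
  moreover have "((\<lambda>t. exp (- (w * t)) * (LBINT x=c..front t. phi x)) has_vector_derivative
      w * exp (- (w * s)) * (LBINT x=c..front s. (x - c) * phi' x)) (at s within {min 0 t..max 0 t})" for s
    using block_pairing_has_real_derivative[OF assms, of s]
    by (simp add: has_real_derivative_iff_has_vector_derivative has_vector_derivative_at_within)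
  ultimately have "(LBINT s=ereal 0..t. w * exp (- (w * s)) * (LBINT x=c..front s. (x - c) * phi' x))
      = exp (- (w * t)) * (LBINT x=c..front t. phi x) - exp (- (w * 0)) * (LBINT x=c..front 0. phi x)"
    by (intro interval_integral_FTC_finite) (auto intro: continuous_on_subset)
  then show ?thesis
    by (simp add: zero_ereal_def)
qed

lemma weak_solution_rho: "weak_solution T (\<lambda>x. w * relu (x - c)) (rho 0) rho"
  unfolding weak_solution_def
proof (intro conjI ballI allI impI)
  show "integrable lborel (rho t)" for t
    by (rule integrable_rho)
  show "(\<lambda>p. rho (fst p) (snd p)) \<in> borel_measurable (lborel \<Otimes>\<^sub>M lborel)"
    by (rule rho_measurable)
  show "set_integrable (lborel \<Otimes>\<^sub>M lborel) ({0..T} \<times> UNIV)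
      (\<lambda>p. rho (fst p) (snd p))"
    by (rule set_integrable_rho)
  show "AE x in lborel. rho 0 x = rho 0 x"
    by simp
  fix phi :: "real \<Rightarrow> real"
  assume phi: "test_function phi"
  note phi' = test_function_has_real_derivative[OF phi] test_function_deriv_continuous[OF phi]
  have "continuous_on UNIV (\<lambda>t. exp (- (w * t)) * (LBINT x=c..front t. phi x))"
    using block_pairing_has_real_derivative[OF phi']
    by (meson DERIV_isCont continuous_at_imp_continuous_on)
  then have "continuous_on {0..T} (\<lambda>t. exp (- (w * t)) * (LBINT x=c..front t. phi x))"
    by (rule continuous_on_subset) simp
  then show "continuous_on {0..T} (\<lambda>t. \<integral>x. rho t x * phi x \<partial>lborel)"
    unfolding integral_rho_mult[OF phi]
    by (rule continuous_on_add[OF continuous_on_const continuous_on_mult_left])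
  show "(\<integral>x. rho t x * phi x \<partial>lborel) - (\<integral>x. rho 0 x * phi x \<partial>lborel)
      = (LBINT s=0..t. (\<integral>x. w * relu (x - c) * rho s x * deriv phi x \<partial>lborel))" for t
    unfolding integral_rho_mult[OF phi] integral_flux_rho interval_lebesgue_integral_mult_right
      block_pairing_FTC[OF phi', symmetric]
    by (simp add: algebra_simps)
qed

end

theorem lemma1:
  fixes x1 x2 eta y2 T :: real and rho02 :: "real \<Rightarrow> real"
  assumes "x1 < x2" and "integrable lborel rho02" and "y2 > x1" and "T > 0"
  shows "\<exists>w a b. \<exists>rho. weak_solution T (\<lambda>x. w * relu (a * x + b))
            (\<lambda>x. if x \<ge> x1 then eta * indicator {x1<..<x2} x else rho02 x) rho \<and>
          (AE x in lborel. rho T x =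
            (if x \<ge> x1 then eta * (x2 - x1) / (y2 - x1) * indicator {x1<..<y2} x else rho02 x))"
proof -
  define L where "L = x2 - x1"
  define w where "w = ln ((y2 - x1) / L) / T"
  interpret dilating_block x1 L w eta rho02
    using assms unfolding L_def by unfold_locales auto
  have "exp (w * T) = (y2 - x1) / L"
    unfolding w_def using assms L_pos by simp
  then have "front T = y2" and "exp (- (w * T)) = L / (y2 - x1)"
    using L_pos by (simp_all add: front_def exp_minus)
  then have rho_T: "rho T x =
      (if x \<ge> x1 then eta * (x2 - x1) / (y2 - x1) * indicator {x1<..<y2} x else rho02 x)" for x
    unfolding rho_def by (auto simp: indicator_def L_def)
  have "rho 0 = (\<lambda>x. if x \<ge> x1 then eta * indicator {x1<..<x2} x else rho02 x)"
    unfolding rho_def front_def by (auto simp: fun_eq_iff indicator_def L_def)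
  then have "weak_solution T (\<lambda>x. w * relu (1 * x + - x1))
      (\<lambda>x. if x \<ge> x1 then eta * indicator {x1<..<x2} x else rho02 x) rho"
    using weak_solution_rho[of T] by simp
  then show ?thesis
    using rho_T by blast
qed

end
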